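(* Let $r \in \mathbb{Z}_{\geqslant 2}$. For any real number $x \geqslant 1$, $$\sum_{n_1 \leqslant x, \dotsc, n_r \leqslant x} \mu \left( n_1 \dotsb n_r \right) \left \lfloor \frac{x}{n_1 \dotsb n_r} \right \rfloor = \sum_{n \leqslant x} (1-r)^{\omega(n)},$$ where the sum on the left runs over all $r$-tuples of positive integers $n_1,\dots,n_r \leqslant x$.
   Context: $\mu$ is the Möbius function, $\omega(n)$ is the number of distinct prime factors of $n$ (with $\omega(1)=0$), and $\lfloor \cdot \rfloor$ is the integer part. *)

theory Defs
  imports "HOL-Computational_Algebra.Computational_Algebra" "HOL-Library.FuncSet"
begin

definition omega :: "nat \<Rightarrow> nat" where
  "omega n = card (prime_factors n)"

definition moebius :: "nat \<Rightarrow> int" where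
  "moebius n = (if squarefree n then (-1) ^ omega n else 0)"

end

theory Submission
  imports Defs
begin

text \<open>Since \<lfloor>x/m\<rfloor> is the number of multiples of m in {1..N}, where N = \<lfloor>x\<rfloor>,
  exchanging the sums turns the left-hand side into the sum over k \<le> N of the sums of
  \<mu>(n_1 ... n_r) over all r-tuples whose product divides k. Only squarefree products contribute,
  i.e. tuples whose product divides the radical of k. These tuples correspond bijectively to the
  maps g from the prime factors of k to {0..r}: g p = i + 1 puts p into n_i and g p = 0 leaves it
  out. Since \<mu> of the product is the product of (if g p = 0 then 1 else -1) over all p, the inner
  sum factors as the product over p | k of (1 - r), which is (1 - r)^\<omega>(k).\<close>

lemma card_multiples_atLeastAtMost:
  fixes m N :: nat
  shows "card {k \<in> {1..N}. m dvd k} = N div m"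
proof (cases "m = 0")
  case False
  have "{k \<in> {1..N}. m dvd k} = (\<lambda>j. m * j) ` {1..N div m}"
    using False by (auto simp: less_eq_div_iff_mult_less_eq mult.commute dest: gr0I)
  moreover have "inj_on (\<lambda>j. m * j) {1..N div m}"
    using False by (auto simp: inj_on_def)
  ultimately show ?thesis
    by (simp add: card_image)
qed auto

lemma floor_divide_of_nat:
  fixes x :: real and m :: nat
  assumes "x \<ge> 0"
  shows "\<lfloor>x / real m\<rfloor> = int (nat \<lfloor>x\<rfloor> div m)"
proof -
  have "\<lfloor>x / real_of_int (int m)\<rfloor> = \<lfloor>x\<rfloor> div int m"
    by (rule floor_divide_real_eq_div) simp
  then show ?thesis
    using assms by (simp add: zdiv_int)
qed

lemma sum_mult_card_eq_sum_sum:
  fixes f :: "'a \<Rightarrow> 'c :: comm_semiring_1"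
  assumes "finite A" "finite K"
  shows "(\<Sum>a\<in>A. f a * of_nat (card {k\<in>K. R a k})) = (\<Sum>k\<in>K. \<Sum>a\<in>{a\<in>A. R a k}. f a)"
proof -
  have "(\<Sum>a\<in>A. f a * of_nat (card {k\<in>K. R a k})) = (\<Sum>a\<in>A. \<Sum>k\<in>K. if R a k then f a else 0)"
    using assms by (simp add: sum.inter_filter[symmetric] mult.commute)
  also have "\<dots> = (\<Sum>k\<in>K. \<Sum>a\<in>A. if R a k then f a else 0)"
    by (rule sum.swap)
  also have "\<dots> = (\<Sum>k\<in>K. \<Sum>a\<in>{a\<in>A. R a k}. f a)"
    using assms by (simp add: sum.inter_filter)
  finally show ?thesis .
qed

lemma prime_factors_prod_primes:
  fixes Q :: "nat set"
  assumes "finite Q" "\<forall>q\<in>Q. prime q"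
  shows "prime_factors (\<Prod>Q) = Q"
proof -
  have "0 \<notin> id ` Q"
    using assms by auto
  then show ?thesis
    using prime_factors_prod[of Q id] assms by (auto simp: prime_prime_factors)
qed

lemma squarefree_prod_primes:
  fixes Q :: "nat set"
  assumes "finite Q" "\<forall>q\<in>Q. prime q"
  shows "squarefree (\<Prod>Q)"
  using assms by (intro squarefree_prod_coprime) (auto simp: primes_coprime squarefree_prime)

lemma moebius_prod_primes:
  fixes Q :: "nat set"
  assumes "finite Q" "\<forall>q\<in>Q. prime q"
  shows "moebius (\<Prod>Q) = (-1) ^ card Q"
  using assms by (simp add: moebius_def omega_def squarefree_prod_primes prime_factors_prod_primes)

lemma prod_prime_factors_squarefree:
  fixes n :: nat
  assumes "squarefree n"
  shows "\<Prod>(prime_factors n) = n"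
proof -
  have "n > 0"
    using assms by (cases n) auto
  then have "(\<Prod>p \<in> prime_factors n. p ^ multiplicity p n) = n"
    by (simp add: prod_prime_factors)
  moreover have "multiplicity p n = 1" if "p \<in> prime_factors n" for p
    using that assms \<open>n > 0\<close> squarefree_factorial_semiring' by blast
  ultimately show ?thesis
    by simp
qed

lemma prod_prime_factors_dvd:
  fixes k :: nat
  assumes "k \<noteq> 0"
  shows "\<Prod>(prime_factors k) dvd k"
proof -
  have "\<Prod>(prime_factors k) dvd (\<Prod>p \<in> prime_factors k. p ^ multiplicity p k)"
    by (intro prod_dvd_prod) (simp add: prime_factors_multiplicity dvd_power)
  also have "\<dots> = k"
    using assms by (simp add: prod_prime_factors)
  finally show ?thesis .
qed

lemma squarefree_dvd_iff_dvd_prod_prime_factors: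
  fixes d k :: nat
  assumes "squarefree d" "k \<noteq> 0"
  shows "d dvd k \<longleftrightarrow> d dvd \<Prod>(prime_factors k)"
proof
  assume "d dvd k"
  then have "prime_factors d \<subseteq> prime_factors k"
    using assms by (intro dvd_prime_factors) auto
  then have "\<Prod>(prime_factors d) dvd \<Prod>(prime_factors k)"
    by (intro prod_dvd_prod_subset) auto
  then show "d dvd \<Prod>(prime_factors k)"
    using assms by (simp add: prod_prime_factors_squarefree)
next
  assume "d dvd \<Prod>(prime_factors k)"
  also have "\<Prod>(prime_factors k) dvd k"
    using assms(2) by (rule prod_prime_factors_dvd)
  finally show "d dvd k" .
qed

lemma prod_dvd_imp_dvd:
  fixes ns :: "'a \<Rightarrow> nat"
  assumes "(\<Prod>i\<in>I. ns i) dvd k" "finite I" "i \<in> I"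
  shows "ns i dvd k"
  using dvd_prodI[OF assms(2,3)] assms(1) by (rule dvd_trans)

lemma prime_dvd_squarefree_prod_unique:
  fixes ns :: "'a \<Rightarrow> nat"
  assumes "finite I" "squarefree (\<Prod>i\<in>I. ns i)" "i \<in> I" "j \<in> I"
    and "prime p" "p dvd ns i" "p dvd ns j"
  shows "i = j"
proof (rule ccontr)
  assume "i \<noteq> j"
  then have "(\<Prod>l\<in>I. ns l) = ns i * (ns j * (\<Prod>l\<in>I - {i} - {j}. ns l))"
    using assms by (simp add: prod.remove)
  moreover have "p ^ 2 dvd ns i * ns j"
    using assms by (simp add: power2_eq_square mult_dvd_mono)
  ultimately have "p ^ 2 dvd (\<Prod>l\<in>I. ns l)"
    by (simp only: dvd_mult2 flip: mult.assoc)
  then have "p dvd 1"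
    using assms(2) by (rule squarefreeD[rotated])
  then show False
    using assms(5) by simp
qed

lemma finite_prod_dvd_tuples:
  fixes k :: nat
  assumes "finite I" "k \<noteq> 0"
  shows "finite {ns \<in> I \<rightarrow>\<^sub>E UNIV. (\<Prod>i\<in>I. ns i) dvd k}"
proof (rule finite_subset)
  show "{ns \<in> I \<rightarrow>\<^sub>E UNIV. (\<Prod>i\<in>I. ns i) dvd k} \<subseteq> I \<rightarrow>\<^sub>E {d. d dvd k}"
    using assms(1) by (auto dest: prod_dvd_imp_dvd)
  show "finite (I \<rightarrow>\<^sub>E {d. d dvd k})"
    using assms by (intro finite_PiE) auto
qed

lemma prod_dvd_tuples_atLeastAtMost:
  fixes k N :: nat
  assumes "finite I" "0 < k" "k \<le> N"
  shows "{ns \<in> I \<rightarrow>\<^sub>E {1..N}. (\<Prod>i\<in>I. ns i) dvd k} = {ns \<in> I \<rightarrow>\<^sub>E UNIV. (\<Prod>i\<in>I. ns i) dvd k}"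
proof -
  have "ns i \<in> {1..N}" if "(\<Prod>i\<in>I. ns i) dvd k" "i \<in> I" for ns i
  proof -
    have "ns i dvd k"
      using that assms(1) by (auto dest: prod_dvd_imp_dvd)
    then show ?thesis
      using assms by (auto dest: dvd_imp_le intro: gr0I)
  qed
  then show ?thesis
    by (auto simp: PiE_iff)
qed

definition prime_blocks :: "nat set \<Rightarrow> nat \<Rightarrow> (nat \<Rightarrow> nat) \<Rightarrow> nat \<Rightarrow> nat" where
  "prime_blocks P r g = (\<lambda>i\<in>{..<r}. \<Prod>{p\<in>P. g p = Suc i})"

lemma prime_factors_prime_blocks:
  assumes "finite P" "\<forall>p\<in>P. prime p" "i < r"
  shows "prime_factors (prime_blocks P r g i) = {p\<in>P. g p = Suc i}"
  using assms by (simp add: prime_blocks_def prime_factors_prod_primes)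

lemma prod_prime_blocks:
  assumes "finite P" "g \<in> P \<rightarrow>\<^sub>E {0..r}"
  shows "(\<Prod>i<r. prime_blocks P r g i) = \<Prod>{p\<in>P. g p \<noteq> 0}"
proof -
  have "(\<Prod>i<r. prime_blocks P r g i) = (\<Prod>i<r. \<Prod>p\<in>P. if g p = Suc i then p else 1)"
    using assms by (simp add: prime_blocks_def prod.inter_filter)
  also have "\<dots> = (\<Prod>p\<in>P. \<Prod>i<r. if g p = Suc i then p else 1)"
    by (rule prod.swap)
  also have "\<dots> = (\<Prod>p\<in>P. if g p \<noteq> 0 then p else 1)"
  proof (rule prod.cong[OF refl])
    fix p
    assume "p \<in> P"
    then have "g p \<le> r"
      using assms by auto
    then show "(\<Prod>i<r. if g p = Suc i then p else 1) = (if g p \<noteq> 0 then p else 1)"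
      by (cases "g p") (simp_all add: prod.delta Suc_le_eq)
  qed
  also have "\<dots> = \<Prod>{p\<in>P. g p \<noteq> 0}"
    using assms by (simp add: prod.inter_filter)
  finally show ?thesis .
qed

lemma inj_on_prime_blocks:
  assumes "finite P" "\<forall>p\<in>P. prime p"
  shows "inj_on (prime_blocks P r) (P \<rightarrow>\<^sub>E {0..r})"
proof (rule inj_onI)
  fix g g'
  assume g: "g \<in> P \<rightarrow>\<^sub>E {0..r}" and g': "g' \<in> P \<rightarrow>\<^sub>E {0..r}"
    and eq: "prime_blocks P r g = prime_blocks P r g'"
  have "{p\<in>P. g p = Suc i} = {p\<in>P. g' p = Suc i}" if "i < r" for i
    by (simp only: prime_factors_prime_blocks[OF assms that, symmetric] eq)
  then have same_block: "g p = Suc i \<longleftrightarrow> g' p = Suc i" if "p \<in> P" "i < r" for p i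
    using that by blast
  show "g = g'"
  proof (rule PiE_ext[OF g g'])
    fix p
    assume "p \<in> P"
    then have "g p \<le> r" "g' p \<le> r"
      using g g' by auto
    then have "g p = Suc i \<longleftrightarrow> g' p = Suc i" for i
      using same_block[OF \<open>p \<in> P\<close>, of i] by (cases "i < r") auto
    then show "g p = g' p"
      by (metis not0_implies_Suc)
  qed
qed

definition prime_block_index :: "nat \<Rightarrow> (nat \<Rightarrow> nat) \<Rightarrow> nat \<Rightarrow> nat" where
  "prime_block_index r ns p = (if \<exists>i<r. p dvd ns i then Suc (LEAST i. p dvd ns i) else 0)"

lemma prime_block_index_le: "prime_block_index r ns p \<le> r"
proof (cases "\<exists>i<r. p dvd ns i")
  case True
  then obtain i where "i < r" "p dvd ns i"
    by blast
  then have "(LEAST i. p dvd ns i) < r"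
    using Least_le[of "\<lambda>i. p dvd ns i" i] by simp
  then show ?thesis
    by (simp add: prime_block_index_def)
next
  case False
  then show ?thesis
    by (auto simp: prime_block_index_def)
qed

lemma prime_block_index_eq_Suc_iff:
  assumes "squarefree (\<Prod>i<r. ns i)" "prime p" "i < r"
  shows "prime_block_index r ns p = Suc i \<longleftrightarrow> p dvd ns i"
proof
  assume "p dvd ns i"
  moreover have "i \<le> j" if "p dvd ns j" for j
    using prime_dvd_squarefree_prod_unique[OF _ assms(1), of i j p] assms that \<open>p dvd ns i\<close>
    by (cases "j < r") auto
  ultimately have "(LEAST j. p dvd ns j) = i"
    by (rule Least_equality)
  then show "prime_block_index r ns p = Suc i"
    using assms(3) \<open>p dvd ns i\<close> by (auto simp: prime_block_index_def)
next
  assume "prime_block_index r ns p = Suc i"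
  then have "\<exists>j. p dvd ns j" "(LEAST j. p dvd ns j) = i"
    by (auto simp: prime_block_index_def split: if_splits)
  then show "p dvd ns i"
    using LeastI_ex[of "\<lambda>j. p dvd ns j"] by simp
qed

lemma prime_blocks_image:
  assumes "finite P" "\<forall>p\<in>P. prime p"
  shows "prime_blocks P r ` (P \<rightarrow>\<^sub>E {0..r}) = {ns \<in> {..<r} \<rightarrow>\<^sub>E UNIV. (\<Prod>i<r. ns i) dvd \<Prod>P}"
proof (intro equalityI subsetI)
  fix ns
  assume "ns \<in> prime_blocks P r ` (P \<rightarrow>\<^sub>E {0..r})"
  then obtain g where g: "g \<in> P \<rightarrow>\<^sub>E {0..r}" and ns: "ns = prime_blocks P r g"
    by blast
  have "\<Prod>{p\<in>P. g p \<noteq> 0} dvd \<Prod>P"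
    using assms by (intro prod_dvd_prod_subset) auto
  then show "ns \<in> {ns \<in> {..<r} \<rightarrow>\<^sub>E UNIV. (\<Prod>i<r. ns i) dvd \<Prod>P}"
    using ns prod_prime_blocks[OF assms(1) g] by (simp add: prime_blocks_def)
next
  fix ns
  assume "ns \<in> {ns \<in> {..<r} \<rightarrow>\<^sub>E UNIV. (\<Prod>i<r. ns i) dvd \<Prod>P}"
  then have ns: "ns \<in> {..<r} \<rightarrow>\<^sub>E UNIV" and dvd: "(\<Prod>i<r. ns i) dvd \<Prod>P"
    by auto
  have sq: "squarefree (\<Prod>i<r. ns i)"
    using dvd squarefree_prod_primes[OF assms] by (rule squarefree_mono)
  define g where "g = restrict (prime_block_index r ns) P"
  have "g \<in> P \<rightarrow>\<^sub>E {0..r}"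
    by (simp add: g_def prime_block_index_le)
  moreover have "prime_blocks P r g i = ns i" if "i < r" for i
  proof -
    have ns_dvd: "ns i dvd \<Prod>P"
      using dvd that by (auto dest: prod_dvd_imp_dvd)
    moreover have "\<Prod>P \<noteq> 0"
      using assms by auto
    ultimately have "ns i \<noteq> 0" "prime_factors (ns i) \<subseteq> P"
      using dvd_prime_factors prime_factors_prod_primes[OF assms] by auto
    then have "prime_factors (ns i) = {p\<in>P. g p = Suc i}"
      using prime_block_index_eq_Suc_iff[OF sq _ that] assms by (auto simp: g_def prime_factors_dvd)
    then have "prime_blocks P r g i = \<Prod>(prime_factors (ns i))"
      using that by (simp add: prime_blocks_def)
    also have "\<dots> = ns i"
      using squarefree_mono[OF ns_dvd squarefree_prod_primes[OF assms]]
      by (rule prod_prime_factors_squarefree)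
    finally show ?thesis .
  qed
  then have "prime_blocks P r g = ns"
    using ns by (auto simp: prime_blocks_def PiE_iff extensional_def fun_eq_iff)
  ultimately show "ns \<in> prime_blocks P r ` (P \<rightarrow>\<^sub>E {0..r})"
    by blast
qed

lemma bij_betw_prime_blocks:
  assumes "finite P" "\<forall>p\<in>P. prime p"
  shows "bij_betw (prime_blocks P r) (P \<rightarrow>\<^sub>E {0..r})
           {ns \<in> {..<r} \<rightarrow>\<^sub>E UNIV. (\<Prod>i<r. ns i) dvd \<Prod>P}"
  using assms by (simp add: bij_betw_def inj_on_prime_blocks prime_blocks_image)

lemma sum_moebius_prod_dvd_prod_primes:
  assumes "finite P" "\<forall>p\<in>P. prime p"
  shows "(\<Sum>ns \<in> {ns \<in> {..<r} \<rightarrow>\<^sub>E UNIV. (\<Prod>i<r. ns i) dvd \<Prod>P}. moebius (\<Prod>i<r. ns i))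
           = (1 - int r) ^ card P"
proof -
  have "(\<Sum>ns \<in> {ns \<in> {..<r} \<rightarrow>\<^sub>E UNIV. (\<Prod>i<r. ns i) dvd \<Prod>P}. moebius (\<Prod>i<r. ns i))
      = (\<Sum>g \<in> P \<rightarrow>\<^sub>E {0..r}. moebius (\<Prod>i<r. prime_blocks P r g i))"
    by (rule sum.reindex_bij_betw[OF bij_betw_prime_blocks[OF assms], symmetric])
  also have "\<dots> = (\<Sum>g \<in> P \<rightarrow>\<^sub>E {0..r}. \<Prod>p\<in>P. if g p = 0 then 1 else -1)"
  proof (rule sum.cong[OF refl])
    fix g
    assume g: "g \<in> P \<rightarrow>\<^sub>E {0..r}"
    have "moebius (\<Prod>i<r. prime_blocks P r g i) = (\<Prod>p\<in>{p\<in>P. g p \<noteq> 0}. -1)"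
      using assms by (simp add: prod_prime_blocks[OF assms(1) g] moebius_prod_primes)
    also have "\<dots> = (\<Prod>p\<in>P. if g p = 0 then 1 else -1)"
      by (simp only: prod.inter_filter[OF assms(1)]) (rule prod.cong; simp)
    finally show "moebius (\<Prod>i<r. prime_blocks P r g i) = (\<Prod>p\<in>P. if g p = 0 then 1 else -1)" .
  qed
  also have "\<dots> = (\<Prod>p\<in>P. \<Sum>j\<in>{0..r}. if j = 0 then 1 else -1)"
    using assms(1) by (rule prod_sum_PiE[symmetric]) simp
  also have "(\<Sum>j\<in>{0..r}. if j = 0 then 1 else -1) = 1 - int r"
    by (induction r) auto
  finally show ?thesis
    by simp
qed

lemma sum_moebius_prod_dvd:
  fixes k :: nat
  assumes "k \<noteq> 0"
  shows "(\<Sum>ns \<in> {ns \<in> {..<r} \<rightarrow>\<^sub>E UNIV. (\<Prod>i<r. ns i) dvd k}. moebius (\<Prod>i<r. ns i))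
           = (1 - int r) ^ omega k"
proof -
  let ?T = "\<lambda>d. {ns \<in> {..<r} \<rightarrow>\<^sub>E UNIV. (\<Prod>i<r. ns i) dvd d}"
  have "(\<Sum>ns \<in> ?T k. moebius (\<Prod>i<r. ns i)) = (\<Sum>ns \<in> ?T (\<Prod>(prime_factors k)). moebius (\<Prod>i<r. ns i))"
  proof (rule sum.mono_neutral_right)
    show "finite (?T k)"
      using assms by (intro finite_prod_dvd_tuples) auto
    show "?T (\<Prod>(prime_factors k)) \<subseteq> ?T k"
      by (auto intro: dvd_trans[OF _ prod_prime_factors_dvd[OF assms]])
    show "\<forall>ns \<in> ?T k - ?T (\<Prod>(prime_factors k)). moebius (\<Prod>i<r. ns i) = 0"
    proof
      fix ns
      assume "ns \<in> ?T k - ?T (\<Prod>(prime_factors k))"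
      then have "\<not> squarefree (\<Prod>i<r. ns i)"
        using squarefree_dvd_iff_dvd_prod_prime_factors[OF _ assms] by blast
      then show "moebius (\<Prod>i<r. ns i) = 0"
        by (simp add: moebius_def)
    qed
  qed
  also have "\<dots> = (1 - int r) ^ omega k"
    unfolding omega_def by (rule sum_moebius_prod_dvd_prod_primes) auto
  finally show ?thesis .
qed

theorem theorem1p1:
  fixes r :: nat and x :: real
  assumes "r \<ge> 2" and "x \<ge> 1"
  shows "(\<Sum>ns \<in> Pi\<^sub>E {..<r} (\<lambda>_. {1..nat \<lfloor>x\<rfloor>}).
            moebius (\<Prod>i<r. ns i) * \<lfloor>x / real (\<Prod>i<r. ns i)\<rfloor>)
       = (\<Sum>n \<in> {1..nat \<lfloor>x\<rfloor>}. (1 - int r) ^ omega n)"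
proof -
  \<comment> \<open>The identity holds for every r.\<close>
  define N where "N = nat \<lfloor>x\<rfloor>"
  have "\<lfloor>x / real m\<rfloor> = int (card {k \<in> {1..N}. m dvd k})" for m
    using assms(2) by (simp add: floor_divide_of_nat N_def flip: card_multiples_atLeastAtMost)
  then have "(\<Sum>ns \<in> {..<r} \<rightarrow>\<^sub>E {1..N}. moebius (\<Prod>i<r. ns i) * \<lfloor>x / real (\<Prod>i<r. ns i)\<rfloor>)
      = (\<Sum>ns \<in> {..<r} \<rightarrow>\<^sub>E {1..N}. moebius (\<Prod>i<r. ns i) * int (card {k \<in> {1..N}. (\<Prod>i<r. ns i) dvd k}))"
    by (simp only:)
  also have "\<dots> = (\<Sum>k \<in> {1..N}. \<Sum>ns \<in> {ns \<in> {..<r} \<rightarrow>\<^sub>E {1..N}. (\<Prod>i<r. ns i) dvd k}. moebius (\<Prod>i<r. ns i))"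
    by (rule sum_mult_card_eq_sum_sum) (simp_all add: finite_PiE)
  also have "\<dots> = (\<Sum>k \<in> {1..N}. (1 - int r) ^ omega k)"
  proof (rule sum.cong[OF refl])
    fix k
    assume k: "k \<in> {1..N}"
    then have "{ns \<in> {..<r} \<rightarrow>\<^sub>E {1..N}. (\<Prod>i<r. ns i) dvd k}
             = {ns \<in> {..<r} \<rightarrow>\<^sub>E UNIV. (\<Prod>i<r. ns i) dvd k}"
      by (intro prod_dvd_tuples_atLeastAtMost) auto
    then show "(\<Sum>ns \<in> {ns \<in> {..<r} \<rightarrow>\<^sub>E {1..N}. (\<Prod>i<r. ns i) dvd k}. moebius (\<Prod>i<r. ns i))
             = (1 - int r) ^ omega k"
      using k by (simp add: sum_moebius_prod_dvd)
  qed
  finally show ?thesis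
    by (simp add: N_def)
qed

end
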